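(* In the setting described in the context, let $\hat u_0=\min\{x\in[v,z_0]: f^2(x)=d\}$, and for $n\ge1$ let $\hat\mu'_{m,n}=\max\{x\in[v,\hat u_0]: f^{m+2n}(x)=d\}$ (these sets are nonempty). Then for each $n\ge1$, every periodic point of $f$ in $[\hat\mu'_{m,n},\hat u_0]$ whose least period is odd has least period $\ge m+2n$.
   Context: Let $I$ be a compact interval and $f:I\to I$ continuous; $f^1=f$, $f^n=f\circ f^{n-1}$. A point $x_0$ is a periodic point of least period $k$ (a period-$k$ point) if $f^k(x_0)=x_0$ and $f^i(x_0)\ne x_0$ for $0<i<k$. Let $m\ge3$ be odd and let $P$ be a periodic orbit of $f$ of least period $m$. Put $e=f^{m-1}(\min P)$. Let $v\in[\min P,e)$ be a point with $f(v)=e$, and let $z\in(v,e)$ be a fixed point of $f$ (such points exist). Define $z_0=\min\{x\in[v,z]: f^2(x)=x\}$ and $d=\max\{x\in[\min P,v]: f^2(x)=z_0\}$ (both sets are nonempty). *)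

theory Defs
  imports "HOL-Analysis.Analysis"
begin

definition least_period :: "(real \<Rightarrow> real) \<Rightarrow> real \<Rightarrow> nat \<Rightarrow> bool" where
  "least_period f x k \<longleftrightarrow> 0 < k \<and> (f ^^ k) x = x \<and> (\<forall>i. 0 < i \<and> i < k \<longrightarrow> (f ^^ i) x \<noteq> x)"

end

theory Submission
  imports Defs
begin

text \<open>
  Write g = f o f. On [v, u0] the map g stays below d, while g maps [d, u0] over
  [d, z0] \<supseteq> [d, u0], and every odd iterate f^t with t \<ge> 5 sends u0 to f z0 \<ge> z0.
  Hence whenever f^t y \<le> d for some y in [v, u0], each f^(t + 2c) takes the value d
  on [y, u0]. A periodic point y in [mu n, u0] of odd period k < m + 2n has
  f^(k+2) y = g y \<le> d, so f^(m+2n) takes the value d on [y, u0], and the maximality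
  of mu n forces f^(m+2n) y = d. Then d would be k-periodic, but
  f^(2k) d = g^(k-1) z0 = z0 \<noteq> d.
\<close>

lemma funpow_image_subset: "f ` S \<subseteq> S \<Longrightarrow> (f ^^ n) ` S \<subseteq> S"
  by (induction n) (auto simp: image_subset_iff)

lemma continuous_on_funpow:
  assumes "continuous_on S f" "f ` S \<subseteq> S"
  shows "continuous_on S (f ^^ n)"
proof (induction n)
  case (Suc n)
  have "continuous_on ((f ^^ n) ` S) f"
    using assms(1) funpow_image_subset[OF assms(2)] by (rule continuous_on_subset)
  with Suc have "continuous_on S (f \<circ> f ^^ n)"
    by (rule continuous_on_compose)
  then show ?case by simp
qed (simp add: continuous_on_id)

lemma funpow_fixpoint: "h x = x \<Longrightarrow> (h ^^ n) x = x"
  by (induction n) auto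

lemma funpow_swap: "(f ^^ i) ((f ^^ j) x) = (f ^^ j) ((f ^^ i) x)"
  by (metis add.commute comp_apply funpow_add)

lemma funpow_mem_orbit:
  assumes "(f ^^ m) x = x" "0 < m"
  shows "(f ^^ k) x \<in> (\<lambda>i. (f ^^ i) x) ` {..<m}"
  using assms by (metis funpow_mod_eq imageI lessThan_iff mod_less_divisor)

lemma funpow_image_superset:
  assumes "J \<subseteq> g ` J"
  shows "J \<subseteq> (g ^^ n) ` J"
proof (induction n)
  case (Suc n)
  have "J \<subseteq> g ` J" by (fact assms)
  also have "\<dots> \<subseteq> g ` (g ^^ n) ` J" using Suc by (rule image_mono)
  finally show ?case by (simp add: image_comp)
qed simp

lemma Icc_subset_image_interval:
  fixes h :: "'a::linear_continuum_topology \<Rightarrow> 'b::linorder_topology"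
  assumes "l \<le> r" "continuous_on {l..r} h"
  shows "{min (h l) (h r)..max (h l) (h r)} \<subseteq> h ` {l..r}"
proof -
  have "connected (h ` {l..r})"
    using assms(2) by (rule connected_continuous_image) simp
  moreover have "h l \<in> h ` {l..r}" "h r \<in> h ` {l..r}"
    using assms(1) by auto
  ultimately show ?thesis
    by (cases "h l \<le> h r") (simp_all add: connected_contains_Icc)
qed

lemma IVT_between:
  fixes h :: "real \<Rightarrow> real"
  assumes "l \<le> r" "continuous_on {l..r} h" "min (h l) (h r) \<le> c" "c \<le> max (h l) (h r)"
  shows "\<exists>x\<in>{l..r}. h x = c"
  using Icc_subset_image_interval[OF assms(1,2)] assms(3,4) by fastforce

lemma
  fixes h k :: "real \<Rightarrow> real"
  assumes "continuous_on {l..r} h" "continuous_on {l..r} k" "x \<in> {l..r}" "h x = k x"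
  shows Inf_coincidence_set_mem: "Inf {x \<in> {l..r}. h x = k x} \<in> {x \<in> {l..r}. h x = k x}"
    and Sup_coincidence_set_mem: "Sup {x \<in> {l..r}. h x = k x} \<in> {x \<in> {l..r}. h x = k x}"
proof -
  have "continuous_on {l..r} (\<lambda>x. h x - k x)"
    using assms(1,2) by (rule continuous_on_diff)
  then have "closed {x \<in> {l..r}. h x - k x = 0}"
    by (rule continuous_closed_preimage_constant) simp
  then have "closed {x \<in> {l..r}. h x = k x}"
    by simp
  moreover have "bdd_below {x \<in> {l..r}. h x = k x}" "bdd_above {x \<in> {l..r}. h x = k x}"
    by (auto intro: bdd_below_mono[OF bdd_below_Icc] bdd_above_mono[OF bdd_above_Icc])
  moreover have "{x \<in> {l..r}. h x = k x} \<noteq> {}"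
    using assms(3,4) by blast
  ultimately show "Inf {x \<in> {l..r}. h x = k x} \<in> {x \<in> {l..r}. h x = k x}"
    and "Sup {x \<in> {l..r}. h x = k x} \<in> {x \<in> {l..r}. h x = k x}"
    by (meson closed_contains_Inf closed_contains_Sup)+
qed

text \<open>
  The point p stands for min P and e for f^(m-1)(min P); of the orbit only the
  m-periodicity of p and its minimality on its own orbit are used.
\<close>
locale odd_orbit_setting =
  fixes f :: "real \<Rightarrow> real" and a b p v z :: real and m :: nat
  assumes cont: "continuous_on {a..b} f"
    and maps: "f ` {a..b} \<subseteq> {a..b}"
    and m: "odd m" "3 \<le> m"
    and p: "p \<in> {a..b}" "(f ^^ m) p = p" "\<And>k. p \<le> (f ^^ k) p"
    and v: "p \<le> v" "f v = (f ^^ (m - 1)) p"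
    and z: "v < z" "z < (f ^^ (m - 1)) p" "f z = z"
begin

abbreviation e :: real where "e \<equiv> (f ^^ (m - 1)) p"

definition z0 :: real where "z0 = Inf {x \<in> {v..z}. (f ^^ 2) x = x}"

definition d :: real where "d = Sup {x \<in> {p..v}. (f ^^ 2) x = z0}"

definition u0 :: real where "u0 = Inf {x \<in> {v..z0}. (f ^^ 2) x = d}"

definition mu :: "nat \<Rightarrow> real" where "mu n = Sup {x \<in> {v..u0}. (f ^^ (m + 2 * n)) x = d}"

lemma continuous_on_iterate: "a \<le> l \<Longrightarrow> r \<le> b \<Longrightarrow> continuous_on {l..r} (f ^^ k)"
  using continuous_on_funpow[OF cont maps] by (rule continuous_on_subset) auto

lemma f_e: "f e = p"
  using m p(2) by (metis One_nat_def Suc_pred' comp_apply funpow.simps(2) odd_pos)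

lemma e_eq_iterate_f2: "e = ((f ^^ 2) ^^ ((m - 1) div 2)) p"
  using m by (simp add: funpow_mult)

lemma f2_v: "(f ^^ 2) v = p"
  using v f_e by (simp add: numeral_2_eq_2)

lemma p_less_v: "p < v"
proof (rule ccontr)
  assume "\<not> p < v"
  then have "(f ^^ 2) p = p" using v f2_v by simp
  then have "e = p" using e_eq_iterate_f2 funpow_fixpoint by metis
  then show False using v z by simp
qed

lemma order_chain: "a \<le> p" "p < v" "v < z" "z < e" "e \<le> b"
  using p(1) p_less_v z funpow_image_subset[OF maps] by fastforce+

lemma z0_least: "x \<in> {v..z} \<Longrightarrow> (f ^^ 2) x = x \<Longrightarrow> z0 \<le> x"
  unfolding z0_def by (rule cInf_lower) (auto intro: bdd_below_mono[OF bdd_below_Icc])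

lemma z0_mem: "v < z0" "z0 \<le> z" "(f ^^ 2) z0 = z0"
proof -
  have "(f ^^ 2) z = z"
    using z(3) by (simp add: numeral_2_eq_2)
  moreover have "continuous_on {v..z} (f ^^ 2)"
    using order_chain v z by (intro continuous_on_iterate) auto
  ultimately have "z0 \<in> {x \<in> {v..z}. (f ^^ 2) x = x}"
    unfolding z0_def using z(1)
    by (intro Inf_coincidence_set_mem[of v z "f ^^ 2" "\<lambda>x. x" z]) (auto intro: continuous_on_id)
  moreover have "(f ^^ 2) v \<noteq> v"
    using f2_v p_less_v by simp
  ultimately show "v < z0" "z0 \<le> z" "(f ^^ 2) z0 = z0"
    by (auto simp: order_le_less)
qed

lemma f2_below_z0: "v \<le> x \<Longrightarrow> x < z0 \<Longrightarrow> (f ^^ 2) x < x"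
proof (rule ccontr)
  assume x: "v \<le> x" "x < z0" "\<not> (f ^^ 2) x < x"
  have "continuous_on {v..x} (\<lambda>t. (f ^^ 2) t - t)"
    using x order_chain z0_mem z by (intro continuous_intros continuous_on_iterate) auto
  then obtain t where t: "t \<in> {v..x}" "(f ^^ 2) t - t = 0"
    using IVT_between[of v x "\<lambda>t. (f ^^ 2) t - t" 0] x f2_v p_less_v by fastforce
  then have "z0 \<le> t"
    using x z0_mem by (intro z0_least) auto
  then show False
    using t x by simp
qed

text \<open>Otherwise f, hence f o f, would have a fixed point in (v, z0).\<close>
lemma z0_le_f_z0: "z0 \<le> f z0"
proof (rule ccontr)
  assume less: "\<not> z0 \<le> f z0"
  have "continuous_on {v..z0} (\<lambda>t. f t - t)"
    using continuous_on_iterate[of v z0 1] order_chain z0_mem z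
    by (intro continuous_intros) auto
  then obtain t where t: "t \<in> {v..z0}" "f t = t"
    using IVT_between[of v z0 "\<lambda>t. f t - t" 0] less v z z0_mem by fastforce
  moreover have "t \<noteq> z0"
    using less t by auto
  moreover have "(f ^^ 2) t = t"
    using t by (simp add: numeral_2_eq_2)
  ultimately show False
    using f2_below_z0[of t] by auto
qed

text \<open>Otherwise the (f o f)-orbit of p would stay below z0, but it passes through e > z.\<close>
lemma f2_reaches_z0: "\<exists>x\<in>{p..v}. (f ^^ 2) x = z0"
proof -
  have "\<exists>x\<in>{p..v}. z0 \<le> (f ^^ 2) x"
  proof (rule ccontr)
    assume "\<not> ?thesis"
    then have below: "\<And>x. x \<in> {p..v} \<Longrightarrow> (f ^^ 2) x < z0"
      by (auto simp: not_le)
    have "((f ^^ 2) ^^ i) p < z0" for i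
    proof (induction i)
      case 0
      then show ?case using p_less_v z0_mem by simp
    next
      case (Suc i)
      define x where "x = ((f ^^ 2) ^^ i) p"
      have "p \<le> x"
        using p(3) by (simp add: x_def funpow_mult)
      then have "(f ^^ 2) x < z0"
        using below f2_below_z0[of x] Suc by (cases "x \<le> v") (auto simp: x_def)
      then show ?case
        by (simp add: x_def)
    qed
    then have "e < z0"
      by (metis e_eq_iterate_f2)
    then show False
      using z0_mem z by simp
  qed
  then obtain x where x: "x \<in> {p..v}" "z0 \<le> (f ^^ 2) x"
    by blast
  moreover have "continuous_on {x..v} (f ^^ 2)"
    using x order_chain by (intro continuous_on_iterate) auto
  ultimately show ?thesis
    using IVT_between[of x v "f ^^ 2" z0] f2_v p_less_v z0_mem by fastforce
qed

lemma d_mem: "p \<le> d" "d \<le> v" "(f ^^ 2) d = z0"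
proof -
  obtain x where "x \<in> {p..v}" "(f ^^ 2) x = z0"
    using f2_reaches_z0 by blast
  moreover have "continuous_on {p..v} (f ^^ 2)"
    using order_chain by (intro continuous_on_iterate) auto
  ultimately have "d \<in> {x \<in> {p..v}. (f ^^ 2) x = z0}"
    unfolding d_def by (intro Sup_coincidence_set_mem[of p v "f ^^ 2" "\<lambda>_. z0" x]) auto
  then show "p \<le> d" "d \<le> v" "(f ^^ 2) d = z0"
    by auto
qed

lemma u0_least: "x \<in> {v..z0} \<Longrightarrow> (f ^^ 2) x = d \<Longrightarrow> u0 \<le> x"
  unfolding u0_def by (rule cInf_lower) (auto intro: bdd_below_mono[OF bdd_below_Icc])

lemma u0_mem: "v \<le> u0" "u0 \<le> z0" "(f ^^ 2) u0 = d"
proof -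
  have cont2: "continuous_on {v..z0} (f ^^ 2)"
    using order_chain z0_mem z by (intro continuous_on_iterate) auto
  then obtain x where "x \<in> {v..z0}" "(f ^^ 2) x = d"
    using IVT_between[of v z0 "f ^^ 2" d] z0_mem d_mem f2_v by fastforce
  with cont2 have "u0 \<in> {x \<in> {v..z0}. (f ^^ 2) x = d}"
    unfolding u0_def by (intro Inf_coincidence_set_mem[of v z0 "f ^^ 2" "\<lambda>_. d" x]) auto
  then show "v \<le> u0" "u0 \<le> z0" "(f ^^ 2) u0 = d"
    by auto
qed

lemma f2_le_d: "v \<le> y \<Longrightarrow> y \<le> u0 \<Longrightarrow> (f ^^ 2) y \<le> d"
proof (rule ccontr)
  assume y: "v \<le> y" "y \<le> u0" "\<not> (f ^^ 2) y \<le> d"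
  have "continuous_on {v..y} (f ^^ 2)"
    using y order_chain u0_mem z0_mem z by (intro continuous_on_iterate) auto
  then obtain x where x: "x \<in> {v..y}" "(f ^^ 2) x = d"
    using IVT_between[of v y "f ^^ 2" d] y d_mem f2_v by fastforce
  then have "u0 \<le> x"
    using y u0_mem by (intro u0_least) auto
  then have "x = y"
    using x y by auto
  then show False
    using x y by simp
qed

lemma odd_iterate_u0:
  assumes "odd t" "5 \<le> t"
  shows "(f ^^ t) u0 = f z0"
proof -
  define q where "q = (t - 5) div 2"
  have t: "t = Suc (2 * (q + 2))"
    using assms unfolding q_def by presburger
  have "(f ^^ t) u0 = f (((f ^^ 2) ^^ (q + 2)) u0)"
    by (simp only: t funpow.simps(2) comp_apply funpow_mult)
  also have "\<dots> = f (((f ^^ 2) ^^ q) ((f ^^ 2) ((f ^^ 2) u0)))"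
    by (simp only: add_2_eq_Suc' funpow_Suc_right comp_apply)
  also have "\<dots> = f z0"
    using u0_mem d_mem z0_mem funpow_fixpoint by metis
  finally show ?thesis .
qed

lemma odd_iterate_hits_d:
  assumes w: "a \<le> w" "w \<le> u0" "(f ^^ t) w \<le> d" and t: "odd t" "5 \<le> t"
  shows "\<exists>x\<in>{w..u0}. (f ^^ (t + 2 * c)) x = d"
proof -
  have "{d..z0} \<subseteq> (f ^^ 2) ` {d..u0}"
    using Icc_subset_image_interval[of d u0 "f ^^ 2"] continuous_on_iterate[of d u0 2]
      d_mem u0_mem z0_mem order_chain by (simp add: min_def max_def)
  also have "\<dots> \<subseteq> (f ^^ 2) ` {d..z0}"
    using u0_mem by (intro image_mono) auto
  finally have "{d..z0} \<subseteq> ((f ^^ 2) ^^ c) ` {d..z0}"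
    by (rule funpow_image_superset)
  moreover have "{d..z0} \<subseteq> (f ^^ t) ` {w..u0}"
  proof -
    have "(f ^^ t) w \<le> d" "z0 \<le> (f ^^ t) u0"
      using w(3) odd_iterate_u0[OF t] z0_le_f_z0 by auto
    moreover have "continuous_on {w..u0} (f ^^ t)"
      using w u0_mem z0_mem order_chain by (intro continuous_on_iterate) auto
    ultimately show ?thesis
      using Icc_subset_image_interval[of w u0 "f ^^ t"] w d_mem z0_mem
      by (fastforce simp: min_def max_def)
  qed
  ultimately have "{d..z0} \<subseteq> ((f ^^ 2) ^^ c) ` (f ^^ t) ` {w..u0}"
    by (meson image_mono order_trans)
  moreover have "(f ^^ 2) ^^ c \<circ> f ^^ t = f ^^ (t + 2 * c)"
    by (simp only: funpow_mult add.commute[of t] funpow_add)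
  ultimately have "{d..z0} \<subseteq> (f ^^ (t + 2 * c)) ` {w..u0}"
    by (simp add: image_comp)
  moreover have "d \<in> {d..z0}"
    using d_mem z0_mem by simp
  ultimately have "d \<in> (f ^^ (t + 2 * c)) ` {w..u0}"
    by blast
  then show ?thesis
    by (metis imageE)
qed

lemma iterate_hits_d_below_u0:
  assumes "1 \<le> n"
  shows "\<exists>x\<in>{v..u0}. (f ^^ (m + 2 * n)) x = d"
proof -
  have "(f ^^ (m + 2)) v = p"
    by (simp only: funpow_add comp_apply f2_v p(2))
  then have "\<exists>x\<in>{v..u0}. (f ^^ (m + 2 + 2 * (n - 1))) x = d"
    using order_chain u0_mem d_mem m by (intro odd_iterate_hits_d) auto
  moreover have "m + 2 + 2 * (n - 1) = m + 2 * n"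
    using assms by simp
  ultimately show ?thesis
    by metis
qed

lemma le_mu: "x \<in> {v..u0} \<Longrightarrow> (f ^^ (m + 2 * n)) x = d \<Longrightarrow> x \<le> mu n"
  unfolding mu_def by (rule cSup_upper) (auto intro: bdd_above_mono[OF bdd_above_Icc])

lemma v_le_mu: "1 \<le> n \<Longrightarrow> v \<le> mu n"
  using iterate_hits_d_below_u0 le_mu by fastforce

lemma iterate_d_ne_d: "0 < k \<Longrightarrow> (f ^^ k) d \<noteq> d"
proof
  assume k: "0 < k" "(f ^^ k) d = d"
  then have "(f ^^ (2 * k)) d = d"
    by (metis funpow_fixpoint funpow_mult mult.commute)
  moreover have "(f ^^ (2 * k)) d = ((f ^^ 2) ^^ (k - 1)) ((f ^^ 2) d)"
    using k(1) by (metis Suc_pred' funpow_Suc_right funpow_mult o_apply)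
  ultimately show False
    using d_mem z0_mem funpow_fixpoint by (metis not_le)
qed

lemma odd_least_period_ge:
  assumes n: "1 \<le> n" and y: "y \<in> {mu n..u0}" and k: "least_period f y k" "odd k"
  shows "m + 2 * n \<le> k"
proof (rule ccontr)
  assume short: "\<not> m + 2 * n \<le> k"
  have yk: "(f ^^ k) y = y" "0 < k"
    using k by (auto simp: least_period_def)
  have yr: "v \<le> y" "y \<le> u0"
    using y v_le_mu[OF n] by auto
  have "k \<noteq> 1"
  proof
    assume "k = 1"
    then have fix2: "(f ^^ 2) y = y"
      using yk by (simp add: numeral_2_eq_2)
    then have "z0 \<le> y"
      using yr u0_mem z0_mem by (intro z0_least) auto
    then have "y = u0" "u0 = z0"
      using yr u0_mem by auto
    then have "d = z0"
      using fix2 u0_mem(3) by simp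
    then show False
      using d_mem z0_mem by simp
  qed
  then have k5: "5 \<le> k + 2"
    using yk k(2) by presburger
  have "(f ^^ (k + 2)) y \<le> d"
    using f2_le_d[OF yr] yk by (simp only: add.commute[of k] funpow_add comp_apply)
  then have "\<exists>x\<in>{y..u0}. (f ^^ (k + 2 + 2 * ((m + 2 * n - (k + 2)) div 2))) x = d"
    using yr order_chain k5 k(2) by (intro odd_iterate_hits_d) auto
  moreover have "k + 2 \<le> m + 2 * n" "even (m + 2 * n - (k + 2))"
    using short k(2) m(1) by presburger+
  then have "k + 2 + 2 * ((m + 2 * n - (k + 2)) div 2) = m + 2 * n"
    by (metis even_two_times_div_two le_add_diff_inverse)
  ultimately obtain x where x: "x \<in> {y..u0}" "(f ^^ (m + 2 * n)) x = d"
    by metis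
  then have "x = y"
    using le_mu[of x n] y yr by auto
  then have "(f ^^ k) d = d"
    using x yk funpow_swap by metis
  then show False
    using iterate_d_ne_d yk by blast
qed

end

theorem lemma10:
  fixes f :: "real \<Rightarrow> real" and a b p0 v z :: real and m :: nat
  assumes ab: "a \<le> b"
    and cont: "continuous_on {a..b} f"
    and maps: "f ` {a..b} \<subseteq> {a..b}"
    and m: "odd m" "m \<ge> 3"
    and p0: "p0 \<in> {a..b}" "least_period f p0 m"
    and v: "v \<in> {Min ((\<lambda>i. (f ^^ i) p0) ` {..<m}) ..< (f ^^ (m - 1)) (Min ((\<lambda>i. (f ^^ i) p0) ` {..<m}))}"
    and fv: "f v = (f ^^ (m - 1)) (Min ((\<lambda>i. (f ^^ i) p0) ` {..<m}))"
    and z: "z \<in> {v <..< (f ^^ (m - 1)) (Min ((\<lambda>i. (f ^^ i) p0) ` {..<m}))}" "f z = z"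
  shows "\<forall>n::nat. n \<ge> 1 \<longrightarrow>
    (let P = (\<lambda>i. (f ^^ i) p0) ` {..<m};
         z0 = Inf {x \<in> {v..z}. (f ^^ 2) x = x};
         d = Sup {x \<in> {Min P..v}. (f ^^ 2) x = z0};
         u0 = Inf {x \<in> {v..z0}. (f ^^ 2) x = d};
         mu = Sup {x \<in> {v..u0}. (f ^^ (m + 2 * n)) x = d}
     in \<forall>y \<in> {mu..u0}. \<forall>k. least_period f y k \<and> odd k \<longrightarrow> k \<ge> m + 2 * n)"
proof -
  define P where "P = (\<lambda>i. (f ^^ i) p0) ` {..<m}"
  have per: "(f ^^ m) p0 = p0" and "0 < m"
    using p0(2) by (auto simp: least_period_def)
  then have "Min P \<in> P"
    unfolding P_def by (intro Min_in) auto
  then obtain j where j: "Min P = (f ^^ j) p0"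
    by (auto simp: P_def)
  have orbit: "(f ^^ k) (Min P) \<in> P" for k
    using funpow_mem_orbit[OF per \<open>0 < m\<close>, of "k + j"] unfolding j
    by (simp add: P_def funpow_add)
  interpret odd_orbit_setting f a b "Min P" v z m
  proof
    show "Min P \<in> {a..b}"
      using funpow_image_subset[OF maps] p0(1) j by blast
    show "(f ^^ m) (Min P) = Min P"
      using j per funpow_swap by metis
    show "Min P \<le> (f ^^ k) (Min P)" for k
      using orbit by (simp add: P_def)
  qed (use cont maps m v fv z in \<open>simp_all add: P_def\<close>)
  show ?thesis
    unfolding Let_def P_def[symmetric] z0_def[symmetric] d_def[symmetric] u0_def[symmetric]
      mu_def[symmetric]
    using odd_least_period_ge by blast
qed

end
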